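(* Let $F\dashv G$ be a Galois connection between lattices $\mathcal{L}$ and $\mathcal{L}'$, and let $p:\mathcal{P}(I\times\mathcal{L})\to\mathcal{P}(O\times\mathcal{L})$ be a (partial) program. Then $\mathrm{MEF}^{F\dashv G}[p]$ is noninterfering.
   Context: A lattice means a partially ordered set $(\mathcal{L},\sqsubseteq)$ with least element $\bot$ in which any two elements have a least upper bound $\sqcup$; $\bigsqcup S$ denotes the least upper bound of a finite set ($\bigsqcup\emptyset=\bot$). A Galois connection $F\dashv G$ between $\mathcal{L}$ and $\mathcal{L}'$ is a pair $F:\mathcal{L}\to\mathcal{L}'$, $G:\mathcal{L}'\to\mathcal{L}$ with $F(\ell)\sqsubseteq_{\mathcal{L}'}\jmath\iff\ell\sqsubseteq_{\mathcal{L}}G(\jmath)$. For a function $H$ and set $S$, $H^*(S)=\{H(s):s\in S\}$. Labeled sets are finite subsets of $V\times\mathcal{L}$; write $a^\ell$ for $(a,\ell)$. For a labeled set $x$: $\mathcal{L}(x)=\{\ell : a^\ell\in x\}$; $x\downarrow\ell=\{a^\jmath\in x : \jmath\sqsubseteq\ell\}$; $x\sim_\ell y$ iff $x\downarrow\ell=y\downarrow\ell$; for $L\subseteq\mathcal{L}$, $x@L=\{a^\ell\in x : \ell\in L\}$. The closure set of finite $S$ is $C(S)=\{\bigsqcup S' : S'\subseteq S\}$ (computed in whichever lattice $S$ lives in); the up-set is $\ell\uparrow S=\{\jmath\in\mathcal{L} : \ell\sqsubseteq\jmath \text{ and } \forall\iota\in S.\ \iota\sqsubseteq\jmath\Rightarrow\iota\sqsubseteq\ell\}$.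 Define $C_{F\dashv G}(S)=G^*(C(F^*(S)))$ and $\mathrm{MEF}^{F\dashv G}[p](x)=\bigcup\{p(x\downarrow\ell)@(\ell\uparrow C_{F\dashv G}(\mathcal{L}(x))) : \ell\in C_{F\dashv G}(\mathcal{L}(x))\}$. A (partial) program $q:\mathcal{P}(I\times\mathcal{L})\to\mathcal{P}(O\times\mathcal{L})$ is noninterfering if for all $\ell\in\mathcal{L}$ and all $x,y$ with $x\sim_\ell y$ such that $q(x)$ and $q(y)$ are both defined, $q(x)\sim_\ell q(y)$. *)

theory Defs
  imports Main
begin

definition fjoin :: "'l::bounded_semilattice_sup_bot set \<Rightarrow> 'l" where
  "fjoin S = Finite_Set.fold sup bot S"

definition closure_set :: "'l::bounded_semilattice_sup_bot set \<Rightarrow> 'l set" where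
  "closure_set S = {fjoin S' | S'. S' \<subseteq> S}"

definition upset :: "'l::bounded_semilattice_sup_bot \<Rightarrow> 'l set \<Rightarrow> 'l set" where
  "upset l S = {j. l \<le> j \<and> (\<forall>i\<in>S. i \<le> j \<longrightarrow> i \<le> l)}"

definition galois_conn ::
  "('l::bounded_semilattice_sup_bot \<Rightarrow> 'm::bounded_semilattice_sup_bot) \<Rightarrow> ('m \<Rightarrow> 'l) \<Rightarrow> bool" where
  "galois_conn F G \<longleftrightarrow> (\<forall>l j. F l \<le> j \<longleftrightarrow> l \<le> G j)"

definition closure_FG ::
  "('l::bounded_semilattice_sup_bot \<Rightarrow> 'm::bounded_semilattice_sup_bot) \<Rightarrow> ('m \<Rightarrow> 'l) \<Rightarrow> 'l set \<Rightarrow> 'l set" where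
  "closure_FG F G S = G ` closure_set (F ` S)"

definition labels :: "('a \<times> 'l) set \<Rightarrow> 'l set" where
  "labels x = snd ` x"

definition down :: "('a \<times> 'l::order) set \<Rightarrow> 'l \<Rightarrow> ('a \<times> 'l) set" where
  "down x l = {(a, j). (a, j) \<in> x \<and> j \<le> l}"

definition restrict_at :: "('a \<times> 'l) set \<Rightarrow> 'l set \<Rightarrow> ('a \<times> 'l) set" where
  "restrict_at x L = {(a, j). (a, j) \<in> x \<and> j \<in> L}"

definition MEF ::
  "('l::bounded_semilattice_sup_bot \<Rightarrow> 'm::bounded_semilattice_sup_bot) \<Rightarrow> ('m \<Rightarrow> 'l)
   \<Rightarrow> (('i \<times> 'l) set \<Rightarrow> ('o \<times> 'l) set option) \<Rightarrow> ('i \<times> 'l) set \<Rightarrow> ('o \<times> 'l) set option" where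
  "MEF F G p x =
     (let Cs = closure_FG F G (labels x) in
      if (\<forall>l\<in>Cs. p (down x l) \<noteq> None)
      then Some (\<Union>l\<in>Cs. restrict_at (the (p (down x l))) (upset l Cs))
      else None)"

definition noninterfering ::
  "(('i \<times> 'l::bounded_semilattice_sup_bot) set \<Rightarrow> ('o \<times> 'l) set option) \<Rightarrow> bool" where
  "noninterfering q \<longleftrightarrow>
     (\<forall>l x y u v. finite x \<longrightarrow> finite y \<longrightarrow> down x l = down y l \<longrightarrow>
        q x = Some u \<longrightarrow> q y = Some v \<longrightarrow> down u l = down v l)"

end

theory Submission
  imports Defs
begin

text \<open>Every label k of the closure set has the form G (fjoin S') with S' \<subseteq> F ` L, and by the
  Galois connection every generator s with F s \<in> S' satisfies s \<le> k. Hence the part of the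
  closure set below l depends only on the labels below l, i.e. on x \<down> l. The part of MEF's
  output below l involves only closure labels k \<le> l, the runs p (x \<down> k), and up-sets
  truncated at l, and all of these agree on l-equivalent inputs.\<close>

lemma fjoin_upper:
  fixes S :: "'l::bounded_semilattice_sup_bot set"
  assumes "finite S" "a \<in> S"
  shows "a \<le> fjoin S"
  using assms
proof (induction S rule: finite_induct)
  case empty
  then show ?case by simp
next
  case (insert b A)
  interpret comp_fun_idem "sup :: 'l \<Rightarrow> 'l \<Rightarrow> 'l" by (fact comp_fun_idem_sup)
  have "fjoin (insert b A) = sup b (fjoin A)"
    unfolding fjoin_def using insert.hyps by (simp add: fold_insert_idem)
  with insert show ?case by (auto intro: le_supI2)
qed

lemma closure_FG_mono: "S \<subseteq> T \<Longrightarrow> closure_FG F G S \<subseteq> closure_FG F G T"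
  unfolding closure_FG_def closure_set_def by blast

lemma closure_FG_generated_below:
  assumes gc: "galois_conn F G" and "finite S" and k: "k \<in> closure_FG F G S"
  shows "k \<in> closure_FG F G {s \<in> S. s \<le> k}"
proof -
  obtain S' where S': "S' \<subseteq> F ` S" and k_eq: "k = G (fjoin S')"
    using k unfolding closure_FG_def closure_set_def by auto
  have "finite S'"
    using S' \<open>finite S\<close> by (meson finite_imageI finite_subset)
  have "s \<le> k" if "s \<in> S" "F s \<in> S'" for s
    using fjoin_upper[OF \<open>finite S'\<close> \<open>F s \<in> S'\<close>] gc k_eq unfolding galois_conn_def by simp
  with S' have "S' \<subseteq> F ` {s \<in> S. s \<le> k}"
    by blast
  then show ?thesis
    unfolding closure_FG_def closure_set_def k_eq by blast
qed

lemma labels_down: "labels (down x l) = {j \<in> labels x. j \<le> l}"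
  unfolding labels_def down_def by force

lemma down_down: "k \<le> l \<Longrightarrow> down (down x l) k = down x k"
  unfolding down_def by auto

lemma closure_FG_transfer:
  assumes gc: "galois_conn F G" and "finite x" and eq: "down x l = down y l"
    and k: "k \<in> closure_FG F G (labels x)" and "k \<le> l"
  shows "k \<in> closure_FG F G (labels y)"
proof -
  have "finite (labels x)"
    using \<open>finite x\<close> unfolding labels_def by simp
  have "{s \<in> labels x. s \<le> k} \<subseteq> labels (down y l)"
    using \<open>k \<le> l\<close> eq[symmetric] by (auto simp: labels_down)
  also have "\<dots> \<subseteq> labels y"
    by (simp add: labels_down)
  finally show ?thesis
    using closure_FG_generated_below[OF gc \<open>finite (labels x)\<close> k] closure_FG_mono by blast
qed

lemma closure_FG_below_eq:
  assumes "galois_conn F G" "finite x" "finite y" "down x l = down y l"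
  shows "{k \<in> closure_FG F G (labels x). k \<le> l} = {k \<in> closure_FG F G (labels y). k \<le> l}"
  using closure_FG_transfer[of F G x l y] closure_FG_transfer[of F G y l x] assms by blast

lemma down_UN_restrict_upset:
  "down (\<Union>k\<in>C. restrict_at (f k) (upset k C)) l =
   (\<Union>k\<in>{i \<in> C. i \<le> l}. down (restrict_at (f k) (upset k {i \<in> C. i \<le> l})) l)"
  unfolding down_def restrict_at_def upset_def by (auto intro: order_trans)

lemma MEF_Some_eq:
  assumes "MEF F G p x = Some u"
  shows "u = (\<Union>k\<in>closure_FG F G (labels x).
               restrict_at (the (p (down x k))) (upset k (closure_FG F G (labels x))))"
  using assms unfolding MEF_def Let_def by (auto split: if_splits)

theorem mainTheorem9:
  fixes F :: "'l::bounded_semilattice_sup_bot \<Rightarrow> 'm::bounded_semilattice_sup_bot"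
    and G :: "'m \<Rightarrow> 'l"
    and p :: "('i \<times> 'l) set \<Rightarrow> ('o \<times> 'l) set option"
  assumes "galois_conn F G"
  shows "noninterfering (MEF F G p)"
  unfolding noninterfering_def
proof (intro allI impI)
  fix l x y u v
  assume "finite x" "finite y" and eq: "down x l = down y l"
    and u: "MEF F G p x = Some u" and v: "MEF F G p y = Some v"
  define Cl where "Cl = {k \<in> closure_FG F G (labels x). k \<le> l}"
  have Cl_y: "Cl = {k \<in> closure_FG F G (labels y). k \<le> l}"
    unfolding Cl_def using closure_FG_below_eq[OF assms \<open>finite x\<close> \<open>finite y\<close> eq] .
  have runs: "down x k = down y k" if "k \<in> Cl" for k
    using that eq down_down unfolding Cl_def by (metis (mono_tags) mem_Collect_eq)
  have "down u l = (\<Union>k\<in>Cl. down (restrict_at (the (p (down x k))) (upset k Cl)) l)"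
    unfolding MEF_Some_eq[OF u] down_UN_restrict_upset Cl_def ..
  also have "\<dots> = (\<Union>k\<in>Cl. down (restrict_at (the (p (down y k))) (upset k Cl)) l)"
    using runs by simp
  also have "\<dots> = down v l"
    unfolding MEF_Some_eq[OF v] down_UN_restrict_upset Cl_y ..
  finally show "down u l = down v l" .
qed

end
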